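(* Let $(A,B)$ be stabilizable and let $K\in\mathbb{R}^{m\times n}$ be a stabilizing gain. With $\hat B_x$, $\hat B_u$ as in the context (with quadratic relaxing function) for a given $\delta>0$, let $\hat B_K(x)=\hat B_x(x)+\hat B_u(Kx)$. Then $$\hat B_K(x)\le x^\top\big(M_x+K^\top M_uK\big)x\quad\text{for all }x\in\mathbb{R}^n,$$ where $M_x=\frac{1}{2\delta^2}C_x^\top\mathrm{diag}(\mathbf 1+w_x)C_x$ and $M_u=\frac{1}{2\delta^2}C_u^\top\mathrm{diag}(\mathbf 1+w_u)C_u$, with $w_x,w_u$ the weighting vectors in the weight recentered case and $w_x=0$, $w_u=0$ in the gradient recentered case.
   Context: Polytopes $\mathcal{X}=\{x\in\mathbb{R}^n:C_xx\le d_x\}$, $\mathcal{U}=\{u\in\mathbb{R}^m:C_uu\le d_u\}$ (compact), $C_x\in\mathbb{R}^{q_x\times n}$, $C_u\in\mathbb{R}^{q_u\times m}$, $d_x,d_u$ entrywise strictly positive; $C^i$ row $i$, $d^i$ entry $i$; $\mathbf 1$ is the all-ones vector. Quadratic relaxed barrier: for $\delta>0$ let $\beta_2(z;\delta)=\frac12\big[\big(\frac{z-2\delta}{\delta}\big)^2-1\big]-\ln\delta$ and $\hat B(z)=-\ln z$ for $z>\delta$, $\hat B(z)=\beta_2(z;\delta)$ for $z\le\delta$. With $z_x^i(x)=-C_x^ix+d_x^i$, $\hat B_x(x)=\sum_i\hat B_{x,i}(x)$ where either $\hat B_{x,i}(x)=\hat B(z_x^i(x))+\ln d_x^i-C_x^ix/d_x^i$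 for all $i$ (gradient recentering) or $\hat B_{x,i}(x)=(1+w_x^i)(\hat B(z_x^i(x))+\ln d_x^i)$ with $w_x\in\mathbb{R}^{q_x}$, $w_x\ge0$, $\sum_i(1+w_x^i)(C_x^i)^\top/d_x^i=0$ (weight recentering); $\hat B_u$ analogously from $C_u,d_u,w_u$. $\delta$ is such that $\hat B_x(0)=\hat B_u(0)=0$ and $\nabla\hat B_x(0)=\nabla\hat B_u(0)=0$. *)

theory Defs
  imports "HOL-Analysis.Analysis"
begin

definition schur_stable :: "real^'n^'n \<Rightarrow> bool" where
  "schur_stable M \<longleftrightarrow> (\<forall>x0. (\<lambda>k. ((\<lambda>y. M *v y) ^^ k) x0) \<longlonglongrightarrow> 0)"

definition stabilizable :: "real^'n^'n \<Rightarrow> real^'m^'n \<Rightarrow> bool" where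
  "stabilizable A B \<longleftrightarrow> (\<exists>K :: real^'n^'m. schur_stable (A + B ** K))"

definition beta2 :: "real \<Rightarrow> real \<Rightarrow> real" where
  "beta2 \<delta> z = 1/2 * (((z - 2*\<delta>) / \<delta>)^2 - 1) - ln \<delta>"

definition Bhat :: "real \<Rightarrow> real \<Rightarrow> real" where
  "Bhat \<delta> z = (if z > \<delta> then - ln z else beta2 \<delta> z)"

text \<open>Recentered relaxed barrier for the polytope {x. C x \<le> d}.
  If grad = True: gradient recentering; otherwise weight recentering with weights w.\<close>
definition rbar :: "bool \<Rightarrow> real \<Rightarrow> real^'n^'q \<Rightarrow> real^'q \<Rightarrow> real^'q \<Rightarrow> real^'n \<Rightarrow> real" where
  "rbar grad \<delta> C d w x =
     (\<Sum>i\<in>UNIV. if grad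
        then Bhat \<delta> (d$i - (C$i) \<bullet> x) + ln (d$i) - ((C$i) \<bullet> x) / d$i
        else (1 + w$i) * (Bhat \<delta> (d$i - (C$i) \<bullet> x) + ln (d$i)))"

definition admissible_w :: "bool \<Rightarrow> real^'n^'q \<Rightarrow> real^'q \<Rightarrow> real^'q \<Rightarrow> bool" where
  "admissible_w grad C d w \<longleftrightarrow>
     (if grad then w = 0
      else (\<forall>i. w$i \<ge> 0) \<and> (\<Sum>i\<in>UNIV. ((1 + w$i) / d$i) *\<^sub>R (C$i)) = 0)"

definition diag_mat :: "real^'q \<Rightarrow> real^'q^'q" where
  "diag_mat v = (\<chi> i j. if i = j then v$i else 0)"

definition Mmat :: "real \<Rightarrow> real^'n^'q \<Rightarrow> real^'q \<Rightarrow> real^'n^'n" where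
  "Mmat \<delta> C w = (1 / (2 * \<delta>^2)) *\<^sub>R (transpose C ** diag_mat (\<chi> i. 1 + w$i) ** C)"

end

theory Submission
  imports Defs
begin

text \<open>For \<open>\<delta> \<le> d\<close> the relaxed barrier \<open>z \<mapsto> B\<^sub>\<delta>(z)\<close> lies below its second-order
  expansion at \<open>d\<close> with curvature \<open>1/\<delta>\<^sup>2\<close>: on \<open>[\<delta>,\<infinity>)\<close> the curvature \<open>1/z\<^sup>2\<close> of \<open>-ln\<close> is
  at most \<open>1/\<delta>\<^sup>2\<close>, and below \<open>\<delta>\<close> the quadratic extension has exactly that curvature.
  Substituting \<open>z = d\<^sub>i - C\<^sub>i x\<close> and summing with weights \<open>1 + w\<^sub>i\<close>, the linear terms
  cancel by the recentering, leaving \<open>x\<^sup>T M x\<close>. The hypothesis \<open>B(0) = 0\<close> supplies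
  \<open>\<delta> \<le> d\<^sub>i\<close>, since each summand \<open>B\<^sub>\<delta>(d\<^sub>i) + ln d\<^sub>i\<close> is \<open>\<le> 0\<close> with equality iff \<open>\<delta> \<le> d\<^sub>i\<close>.\<close>

lemma beta2_plus_ln_less_0:
  fixes \<delta> z :: real
  assumes "0 < z" and "z < \<delta>"
  shows "beta2 \<delta> z + ln z < 0"
proof -
  have "beta2 \<delta> z + ln z < beta2 \<delta> \<delta> + ln \<delta>"
  proof (rule DERIV_pos_imp_increasing_open[OF \<open>z < \<delta>\<close>])
    fix \<xi> assume \<xi>: "z < \<xi>" "\<xi> < \<delta>"
    have "DERIV (\<lambda>z. beta2 \<delta> z + ln z) \<xi> :> (\<xi> - 2*\<delta>)/\<delta>^2 + 1/\<xi>"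
      unfolding beta2_def using \<xi> assms
      by (auto intro!: derivative_eq_intros simp: field_simps power2_eq_square)
    moreover have "(\<xi> - 2*\<delta>)/\<delta>^2 + 1/\<xi> = (\<xi> - \<delta>)^2 / (\<delta>^2 * \<xi>)"
      using \<xi> assms by (simp add: field_simps power2_eq_square)
    moreover have "(\<xi> - \<delta>)^2 / (\<delta>^2 * \<xi>) > 0"
      using \<xi> assms by simp
    ultimately show "\<exists>y. DERIV (\<lambda>z. beta2 \<delta> z + ln z) \<xi> :> y \<and> y > 0"
      by auto
  next
    show "continuous_on {z..\<delta>} (\<lambda>z. beta2 \<delta> z + ln z)"
      unfolding beta2_def using assms by (intro continuous_intros) auto
  qed
  also have "beta2 \<delta> \<delta> + ln \<delta> = 0"
    unfolding beta2_def using assms by simp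
  finally show ?thesis .
qed

lemma neg_ln_le_quadratic_majorant:
  fixes \<delta> d z :: real
  assumes "0 < \<delta>" "\<delta> \<le> d" "\<delta> \<le> z"
  shows "- ln z \<le> - ln d - (z - d)/d + (z - d)^2 / (2*\<delta>^2)"
proof -
  define g where "g z = ln z - (z - d)/d + (z - d)^2 / (2*\<delta>^2)" for z
  have g': "DERIV g \<xi> :> (\<xi> - d) * (1/\<delta>^2 - 1/(\<xi>*d))" if "\<delta> \<le> \<xi>" for \<xi>
  proof -
    have "DERIV g \<xi> :> 1/\<xi> - 1/d + (\<xi> - d)/\<delta>^2"
      unfolding g_def using that assms
      by (auto intro!: derivative_eq_intros simp: field_simps power2_eq_square)
    moreover have "1/\<xi> - 1/d + (\<xi> - d)/\<delta>^2 = (\<xi> - d) * (1/\<delta>^2 - 1/(\<xi>*d))"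
      using that assms by (simp add: field_simps)
    ultimately show ?thesis by simp
  qed
  have curvature: "1/(\<xi>*d) \<le> 1/\<delta>^2" if "\<delta> \<le> \<xi>" for \<xi>
    using that assms by (simp add: power2_eq_square frac_le mult_mono)
  have "g d \<le> g z"
  proof (cases "d \<le> z")
    case True
    show ?thesis
    proof (rule DERIV_nonneg_imp_nondecreasing[OF True])
      fix \<xi> assume "d \<le> \<xi>" "\<xi> \<le> z"
      then show "\<exists>y. DERIV g \<xi> :> y \<and> y \<ge> 0"
        using g' curvature assms by (intro exI[of _ "(\<xi> - d) * (1/\<delta>^2 - 1/(\<xi>*d))"]) auto
    qed
  next
    case False
    show ?thesis
    proof (rule DERIV_nonpos_imp_nonincreasing[of z d g])
      fix \<xi> assume "z \<le> \<xi>" "\<xi> \<le> d"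
      then show "\<exists>y. DERIV g \<xi> :> y \<and> y \<le> 0"
        using g' curvature assms
        by (intro exI[of _ "(\<xi> - d) * (1/\<delta>^2 - 1/(\<xi>*d))"] conjI mult_nonpos_nonneg) auto
    qed (use False in simp)
  qed
  then show ?thesis
    unfolding g_def by simp
qed

lemma Bhat_le_quadratic_majorant:
  assumes "0 < \<delta>" "\<delta> \<le> d"
  shows "Bhat \<delta> z \<le> - ln d - (z - d)/d + (z - d)^2 / (2*\<delta>^2)"
proof (cases "\<delta> < z")
  case True
  then show ?thesis
    using neg_ln_le_quadratic_majorant[OF assms] unfolding Bhat_def by simp
next
  case False
  have "d > 0" using assms by simp
  have at_\<delta>: "- ln \<delta> \<le> - ln d - (\<delta> - d)/d + (\<delta> - d)^2 / (2*\<delta>^2)"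
    using neg_ln_le_quadratic_majorant[OF assms] by simp
  \<comment> \<open>both sides have curvature \<open>1/\<delta>\<^sup>2\<close> here, so their difference is affine in \<open>z\<close>\<close>
  have "(- ln d - (z - d)/d + (z - d)^2 / (2*\<delta>^2) - beta2 \<delta> z)
        - (- ln d - (\<delta> - d)/d + (\<delta> - d)^2 / (2*\<delta>^2) + ln \<delta>)
      = (\<delta> - z) * (d - \<delta>)^2 / (\<delta>^2 * d)"
    unfolding beta2_def using assms \<open>d > 0\<close> by (simp add: field_simps power2_eq_square)
  moreover have "(\<delta> - z) * (d - \<delta>)^2 / (\<delta>^2 * d) \<ge> 0"
    using False \<open>d > 0\<close> by simp
  moreover have "Bhat \<delta> z = beta2 \<delta> z"
    using False unfolding Bhat_def by simp
  ultimately show ?thesis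
    using at_\<delta> by linarith
qed

lemma Bhat_plus_ln_eq_0:
  fixes \<delta> z :: real
  assumes "0 < \<delta>" "\<delta> \<le> z"
  shows "Bhat \<delta> z + ln z = 0"
  using assms unfolding Bhat_def beta2_def by auto

lemma Bhat_plus_ln_nonpos:
  fixes \<delta> z :: real
  assumes "0 < \<delta>" "0 < z"
  shows "Bhat \<delta> z + ln z \<le> 0"
  using beta2_plus_ln_less_0[of z \<delta>] Bhat_plus_ln_eq_0[of \<delta> z] assms
  unfolding Bhat_def by (cases "z < \<delta>") auto

lemma Bhat_plus_ln_eq_0_iff:
  fixes \<delta> z :: real
  assumes "0 < \<delta>" "0 < z"
  shows "Bhat \<delta> z + ln z = 0 \<longleftrightarrow> \<delta> \<le> z"
  using beta2_plus_ln_less_0[of z \<delta>] Bhat_plus_ln_eq_0[of \<delta> z] assms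
  unfolding Bhat_def by (cases "z < \<delta>") auto

lemma inner_transpose_mult_mult:
  fixes K :: "real^'n^'m" and M :: "real^'m^'m"
  shows "x \<bullet> ((transpose K ** M ** K) *v x) = (K *v x) \<bullet> (M *v (K *v x))"
proof -
  have "(transpose K ** M ** K) *v x = (M *v (K *v x)) v* K"
    by (metis matrix_vector_mul_assoc transpose_matrix_vector)
  then show ?thesis
    by (metis dot_lmul_matrix inner_commute)
qed

lemma diag_mat_mult_component: "(diag_mat v *v y) $ i = v$i * y$i"
  unfolding diag_mat_def matrix_vector_mult_def
  by (simp add: if_distrib[where f = "\<lambda>a. a * _"] cong: if_cong)

lemma inner_Mmat:
  fixes C :: "real^'n^'q"
  shows "x \<bullet> (Mmat \<delta> C w *v x) = (\<Sum>i\<in>UNIV. (1 + w$i) * (C$i \<bullet> x)^2) / (2*\<delta>^2)"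
proof -
  have "x \<bullet> (Mmat \<delta> C w *v x)
      = (C *v x) \<bullet> (diag_mat (\<chi> i. 1 + w$i) *v (C *v x)) / (2*\<delta>^2)"
    unfolding Mmat_def
    by (simp add: inner_transpose_mult_mult scaleR_matrix_vector_assoc[symmetric])
  also have "(C *v x) \<bullet> (diag_mat (\<chi> i. 1 + w$i) *v (C *v x))
      = (\<Sum>i\<in>UNIV. (1 + w$i) * (C$i \<bullet> x)^2)"
    unfolding inner_vec_def[of "C *v x"] diag_mat_mult_component
    by (simp add: matrix_vector_mul_component power2_eq_square mult_ac)
  finally show ?thesis .
qed

lemma admissible_w_nonneg:
  assumes "admissible_w grad C d w"
  shows "0 \<le> w$i"
  using assms unfolding admissible_w_def by (cases grad) auto

lemma rbar_eq_weighted_sum: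
  assumes "admissible_w grad C d w"
  shows "rbar grad \<delta> C d w x =
    (\<Sum>i\<in>UNIV. (1 + w$i) * (Bhat \<delta> (d$i - C$i \<bullet> x) + ln (d$i))
       - (if grad then (C$i \<bullet> x) / d$i else 0))"
  using assms unfolding rbar_def admissible_w_def by (cases grad) auto

lemma admissible_w_linear_part_eq_0:
  assumes "admissible_w grad C d w"
  shows "(\<Sum>i\<in>UNIV. (1 + w$i) * ((C$i \<bullet> x) / d$i) - (if grad then (C$i \<bullet> x) / d$i else 0)) = 0"
proof (cases grad)
  case False
  then have "(\<Sum>i\<in>UNIV. ((1 + w$i) / d$i) *\<^sub>R C$i) \<bullet> x = 0"
    using assms unfolding admissible_w_def by simp
  then show ?thesis
    using False by (simp add: inner_sum_left)
next
  case True
  then show ?thesis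
    using assms unfolding admissible_w_def by simp
qed

lemma rbar_at_0_eq_0_imp_delta_le:
  assumes adm: "admissible_w grad C d w"
    and d_pos: "\<forall>i. 0 < d$i" and "0 < \<delta>"
    and "rbar grad \<delta> C d w 0 = 0"
  shows "\<delta> \<le> d$i"
proof -
  let ?f = "\<lambda>i. - ((1 + w$i) * (Bhat \<delta> (d$i) + ln (d$i)))"
  have nonneg: "0 \<le> ?f j" for j
    using Bhat_plus_ln_nonpos[OF \<open>0 < \<delta>\<close> d_pos[rule_format, of j]]
      admissible_w_nonneg[OF adm, of j]
    by (simp add: mult_nonneg_nonpos)
  have "sum ?f UNIV = 0"
    using assms rbar_eq_weighted_sum[OF adm, of \<delta> 0]
    by (simp add: sum_negf if_distrib cong: if_cong)
  then have "?f i = 0"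
    using sum_nonneg_eq_0_iff[of UNIV ?f] nonneg by simp
  moreover have "0 < 1 + w$i"
    using admissible_w_nonneg[OF adm, of i] by simp
  ultimately show ?thesis
    using Bhat_plus_ln_eq_0_iff[OF \<open>0 < \<delta>\<close>] d_pos by simp
qed

lemma rbar_le_Mmat:
  assumes adm: "admissible_w grad C d w"
    and "0 < \<delta>" and d_ge: "\<forall>i. \<delta> \<le> d$i"
  shows "rbar grad \<delta> C d w x \<le> x \<bullet> (Mmat \<delta> C w *v x)"
proof -
  let ?t = "\<lambda>i. C$i \<bullet> x"
  have term_le: "Bhat \<delta> (d$i - ?t i) + ln (d$i) \<le> ?t i / d$i + (?t i)^2 / (2*\<delta>^2)" for i
    using Bhat_le_quadratic_majorant[OF \<open>0 < \<delta>\<close> d_ge[rule_format, of i], of "d$i - ?t i"]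
    by (simp add: power2_commute)
  have "rbar grad \<delta> C d w x
      \<le> (\<Sum>i\<in>UNIV. (1 + w$i) * (?t i / d$i + (?t i)^2 / (2*\<delta>^2))
          - (if grad then ?t i / d$i else 0))"
    unfolding rbar_eq_weighted_sum[OF adm]
    using term_le admissible_w_nonneg[OF adm]
    by (intro sum_mono diff_right_mono mult_left_mono) (auto intro: add_nonneg_nonneg)
  also have "\<dots> = (\<Sum>i\<in>UNIV. (1 + w$i) * (?t i)^2) / (2*\<delta>^2)
      + (\<Sum>i\<in>UNIV. (1 + w$i) * (?t i / d$i) - (if grad then ?t i / d$i else 0))"
    by (simp add: sum.distrib[symmetric] sum_divide_distrib distrib_left algebra_simps)
  also have "\<dots> = x \<bullet> (Mmat \<delta> C w *v x)"
    using admissible_w_linear_part_eq_0[OF adm] by (simp add: inner_Mmat)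
  finally show ?thesis .
qed

theorem lemma3:
  fixes A :: "real^'n^'n" and B :: "real^'m^'n" and K :: "real^'n^'m"
    and Cx :: "real^'n^'qx" and dx :: "real^'qx" and wx :: "real^'qx"
    and Cu :: "real^'m^'qu" and du :: "real^'qu" and wu :: "real^'qu"
    and \<delta> :: real and grad :: bool
  assumes stab: "stabilizable A B"
    and K_stab: "schur_stable (A + B ** K)"
    and dx_pos: "\<forall>i. dx$i > 0" and du_pos: "\<forall>i. du$i > 0"
    and X_compact: "compact {x. \<forall>i. (Cx *v x)$i \<le> dx$i}"
    and U_compact: "compact {u. \<forall>i. (Cu *v u)$i \<le> du$i}"
    and wx_adm: "admissible_w grad Cx dx wx"
    and wu_adm: "admissible_w grad Cu du wu"
    and \<delta>_pos: "\<delta> > 0"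
    and Bx0: "rbar grad \<delta> Cx dx wx 0 = 0"
    and Bu0: "rbar grad \<delta> Cu du wu 0 = 0"
    and dBx0: "(rbar grad \<delta> Cx dx wx has_derivative (\<lambda>h. 0)) (at 0)"
    and dBu0: "(rbar grad \<delta> Cu du wu has_derivative (\<lambda>h. 0)) (at 0)"
  shows "\<forall>x :: real^'n.
           rbar grad \<delta> Cx dx wx x + rbar grad \<delta> Cu du wu (K *v x)
             \<le> x \<bullet> ((Mmat \<delta> Cx wx + transpose K ** Mmat \<delta> Cu wu ** K) *v x)"
proof
  fix x :: "real^'n"
  have "rbar grad \<delta> Cx dx wx x \<le> x \<bullet> (Mmat \<delta> Cx wx *v x)"
    using rbar_le_Mmat[OF wx_adm \<delta>_pos] rbar_at_0_eq_0_imp_delta_le[OF wx_adm dx_pos \<delta>_pos Bx0] by blast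
  moreover have "rbar grad \<delta> Cu du wu (K *v x) \<le> (K *v x) \<bullet> (Mmat \<delta> Cu wu *v (K *v x))"
    using rbar_le_Mmat[OF wu_adm \<delta>_pos] rbar_at_0_eq_0_imp_delta_le[OF wu_adm du_pos \<delta>_pos Bu0] by blast
  ultimately show "rbar grad \<delta> Cx dx wx x + rbar grad \<delta> Cu du wu (K *v x)
      \<le> x \<bullet> ((Mmat \<delta> Cx wx + transpose K ** Mmat \<delta> Cu wu ** K) *v x)"
    by (simp add: matrix_vector_mult_add_rdistrib inner_add_right inner_transpose_mult_mult)
qed

end
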